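(* Assume (H1): $\bar L<\infty$ and $\sup_{0<t<T}\bar b(t)<\infty$ for every $T>0$. Then for every $T>0$ there is a constant $C$ such that for all $0<s<t\le T$, $|M_1(t)-M_1(s)|\le C\big((t-s)+F(t)-F(s)\big)$.
   Context: Crump–Mode–Jagers (CMJ) setting. $L$ is an $\mathbb N$-valued random variable with $\bar L=\mathbb E[L]$; $\eta>0$ a random lifetime with $F(t)=\mathbb P(\eta\le t)$, $F^c=1-F$; $b=(b(t))_{t\ge0}$ a measurable $\mathbb R_+$-valued random process with $\bar b(t)=\mathbb E[b(t)]$. $Z$ is the CMJ process started from one ancestor (each individual independently lives for a copy of $\eta$ and, at the jump times in its age of a Cox process with intensity given by its copy of $b$, gives birth to an independent copy of $L$ children, each starting an independent copy of the process), and $M_1(t)=\mathbb E[Z(t)]$, which is the (locally bounded) solution of $M_1(t)=F^c(t)+\int_0^t\bar L\,M_1(t-s)\bar b(s)\,ds$. *)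

theory Defs
  imports "HOL-Probability.Probability"
begin

definition cmj_Lbar :: "'a measure \<Rightarrow> ('a \<Rightarrow> nat) \<Rightarrow> real" where
  "cmj_Lbar M L = (\<integral>\<omega>. real (L \<omega>) \<partial>M)"

definition cmj_F :: "'a measure \<Rightarrow> ('a \<Rightarrow> real) \<Rightarrow> real \<Rightarrow> real" where
  "cmj_F M eta t = measure M {\<omega> \<in> space M. eta \<omega> \<le> t}"

definition cmj_bbar :: "'a measure \<Rightarrow> (real \<Rightarrow> 'a \<Rightarrow> real) \<Rightarrow> real \<Rightarrow> real" where
  "cmj_bbar M b t = enn2real (\<integral>\<^sup>+\<omega>. ennreal (b t \<omega>) \<partial>M)"

definition cmj_renewal_solution ::
  "real \<Rightarrow> (real \<Rightarrow> real) \<Rightarrow> (real \<Rightarrow> real) \<Rightarrow> (real \<Rightarrow> real) \<Rightarrow> bool" where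
  "cmj_renewal_solution Lbar F bbar M1 \<longleftrightarrow>
     M1 \<in> borel_measurable borel \<and>
     (\<forall>T\<ge>0. \<exists>B. \<forall>t\<in>{0..T}. \<bar>M1 t\<bar> \<le> B) \<and>
     (\<forall>t\<ge>0. M1 t = (1 - F t) +
         (LINT s:{0..t}|lborel. Lbar * M1 (t - s) * bbar s))"

end

(* Subtracting the renewal equation at s and t = s + h gives
     M1 t - M1 s = -(F t - F s) + Lbar (conv t - conv s),
   where conv y = int_0^y M1 (y - u) bbar u du, so it suffices to show
   |conv (y + h) - conv y| <= c h for 0 <= y <= T - h.  This increment splits into an integral
   over [y, y + h], which is O(h), and an integral over [0, y] of increments of M1 against bbar.
   Using the same identity inside that integral, the increments of F only enter integrated over
   [0, y], where they contribute at most h because 0 <= F <= 1; what remains is Lbar bbar times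
   the integral of the increments of conv themselves, and a Gronwall argument on the weighted
   supremum of |conv (y + h) - conv y| exp (-a y) closes the estimate. *)

theory Submission
  imports Defs
begin

lemma set_integrable_Icc_bounded:
  fixes f :: "real \<Rightarrow> real"
  assumes "f \<in> borel_measurable borel" and "\<And>u. u \<in> {a..b} \<Longrightarrow> \<bar>f u\<bar> \<le> B"
  shows "set_integrable lborel {a..b} f"
  unfolding set_integrable_def
  by (rule integrableI_bounded_set[where A="{a..b}" and B=B])
    (use assms in \<open>auto simp: indicator_def emeasure_lborel_Icc_eq\<close>)

lemma integrable_on_Icc_bounded:
  fixes f :: "real \<Rightarrow> real"
  assumes "f \<in> borel_measurable borel" and "\<And>u. u \<in> {a..b} \<Longrightarrow> \<bar>f u\<bar> \<le> B"
  shows "f integrable_on {a..b}"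
  using set_integrable_Icc_bounded[OF assms] by (rule set_borel_integral_eq_integral(1))

lemma has_integral_reflect_Icc:
  fixes f :: "real \<Rightarrow> real"
  assumes "(f has_integral I) {0..x}"
  shows "((\<lambda>u. f (x - u)) has_integral I) {0..x}"
proof -
  have "((\<lambda>u. f (- u)) has_integral I) {-x..0}"
    using has_integral_reflect_real[where a=0 and b=x and f=f] assms by simp
  then show ?thesis
    using has_integral_shift_Icc_real[of "\<lambda>u. f (- u)" "-x" I 0 x] by (simp add: o_def)
qed

lemma has_integral_exp_Icc:
  fixes a x :: real
  assumes "a \<noteq> 0" and "0 \<le> x"
  shows "((\<lambda>y. exp (a * y)) has_integral (exp (a * x) - 1) / a) {0..x}"
proof -
  have "((\<lambda>y. exp (a * y)) has_integral exp (a * x) / a - exp (a * 0) / a) {0..x}"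
    using assms
    by (intro fundamental_theorem_of_calculus)
      (auto intro!: derivative_eq_intros simp: has_real_derivative_iff_has_vector_derivative[symmetric])
  then show ?thesis
    by (simp add: diff_divide_distrib)
qed

lemma integral_increment_le:
  fixes F :: "real \<Rightarrow> real"
  assumes F: "F \<in> borel_measurable borel" "\<And>y. 0 \<le> F y" "\<And>y. F y \<le> 1"
    and "0 \<le> x" and "0 \<le> h"
  shows "(\<lambda>y. F (y + h) - F y) integrable_on {0..x}"
    and "integral {0..x} (\<lambda>y. F (y + h) - F y) \<le> h"
proof -
  have F_int: "F integrable_on {p..q}" for p q
    by (rule integrable_on_Icc_bounded[where B=1]) (use F in \<open>auto simp: abs_le_iff intro: order_trans[OF _ zero_le_one]\<close>)
  have shifted: "(\<lambda>y. F (y + h)) integrable_on {0..x}"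
    "integral {0..x} (\<lambda>y. F (y + h)) = integral {h..x + h} F"
    using integrable_on_shift_Icc_real[of F h 0 x] integral_shift_Icc_real[of 0 x F h] F_int
    by (simp_all add: o_def add.commute)
  then show "(\<lambda>y. F (y + h) - F y) integrable_on {0..x}"
    using F_int by (intro integrable_diff)
  have "integral {0..h} F + integral {h..x + h} F = integral {x..x + h} F + integral {0..x} F"
    using assms F_int by (simp add: Henstock_Kurzweil_Integration.integral_combine add.commute)
  moreover have "0 \<le> integral {0..h} F"
    using F F_int by (intro integral_nonneg) auto
  moreover have "integral {x..x + h} F \<le> integral {x..x + h} (\<lambda>_. 1)"
    using F F_int by (intro integral_le) auto
  ultimately show "integral {0..x} (\<lambda>y. F (y + h) - F y) \<le> h"
    using shifted F_int \<open>0 \<le> h\<close> by (simp add: integral_diff)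
qed

(* Gronwall's lemma without any measurability of D: the argument runs on the supremum of
   D y * exp (- a y). *)
lemma exp_weighted_sup_bound:
  fixes D :: "real \<Rightarrow> real" and a \<alpha> B R :: real
  assumes "0 \<le> a" and "0 \<le> \<alpha>"
    and D_nonneg: "\<And>x. x \<in> {0..R} \<Longrightarrow> 0 \<le> D x"
    and D_bounded: "\<And>x. x \<in> {0..R} \<Longrightarrow> D x \<le> B"
    and improve: "\<And>W x. 0 \<le> W \<Longrightarrow> (\<forall>y\<in>{0..R}. D y \<le> W * exp (a * y)) \<Longrightarrow> x \<in> {0..R} \<Longrightarrow>
      D x \<le> \<alpha> + W / 2 * exp (a * x)"
    and x: "x \<in> {0..R}"
  shows "D x \<le> 2 * \<alpha> * exp (a * x)"
proof -
  have decay: "exp (- (a * y)) \<le> 1" if "y \<in> {0..R}" for y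
    using that \<open>0 \<le> a\<close> by simp
  define W where "W = (SUP y\<in>{0..R}. D y * exp (- (a * y)))"
  have bdd: "bdd_above ((\<lambda>y. D y * exp (- (a * y))) ` {0..R})"
    by (rule bdd_aboveI2[where M=B])
      (metis D_bounded D_nonneg decay mult_left_le order_trans)
  have W_upper: "D y * exp (- (a * y)) \<le> W" if "y \<in> {0..R}" for y
    unfolding W_def using that bdd by (rule cSUP_upper)
  have W_nonneg: "0 \<le> W"
    using W_upper[OF x] D_nonneg[OF x] by (meson exp_ge_zero mult_nonneg_nonneg order_trans)
  have D_le: "D y \<le> W * exp (a * y)" if "y \<in> {0..R}" for y
    using W_upper[OF that] by (simp add: exp_minus field_simps)
  have "D y * exp (- (a * y)) \<le> \<alpha> + W / 2" if "y \<in> {0..R}" for y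
  proof -
    have "D y * exp (- (a * y)) \<le> (\<alpha> + W / 2 * exp (a * y)) * exp (- (a * y))"
      using improve[OF W_nonneg _ that] D_le by (intro mult_right_mono) auto
    also have "\<dots> = \<alpha> * exp (- (a * y)) + W / 2"
      by (simp add: algebra_simps exp_minus)
    also have "\<dots> \<le> \<alpha> + W / 2"
      using decay[OF that] \<open>0 \<le> \<alpha>\<close> by (simp add: mult_left_le)
    finally show ?thesis .
  qed
  then have "W \<le> \<alpha> + W / 2"
    unfolding W_def using x by (intro cSUP_least) auto
  then have "W \<le> 2 * \<alpha>"
    by linarith
  then show ?thesis
    using D_le[OF x] by (meson exp_ge_zero mult_right_mono order_trans)
qed

locale bounded_renewal_equation =
  fixes M1 F \<beta> :: "real \<Rightarrow> real" and K T Bm Bb :: real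
  assumes M1_measurable [measurable]: "M1 \<in> borel_measurable borel"
    and \<beta>_measurable [measurable]: "\<beta> \<in> borel_measurable borel"
    and F_mono: "mono F" and F_nonneg: "\<And>x. 0 \<le> F x" and F_le_1: "\<And>x. F x \<le> 1"
    and T_nonneg: "0 \<le> T"
    and M1_bound: "\<And>x. x \<in> {0..T} \<Longrightarrow> \<bar>M1 x\<bar> \<le> Bm"
    and \<beta>_nonneg: "\<And>u. u \<in> {0..T} \<Longrightarrow> 0 \<le> \<beta> u"
    and \<beta>_bound: "\<And>u. u \<in> {0..T} \<Longrightarrow> \<beta> u \<le> Bb"
    and renewal: "\<And>t. t \<in> {0..T} \<Longrightarrow> M1 t = 1 - F t + K * integral {0..t} (\<lambda>u. M1 (t - u) * \<beta> u)"
begin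

definition conv :: "real \<Rightarrow> real" where
  "conv t = integral {0..t} (\<lambda>u. M1 (t - u) * \<beta> u)"

lemma Bm_nonneg: "0 \<le> Bm"
  using M1_bound[of 0] T_nonneg by force

lemma Bb_nonneg: "0 \<le> Bb"
  using \<beta>_nonneg[of 0] \<beta>_bound[of 0] T_nonneg by force

lemma abs_conv_integrand_le:
  assumes "u \<in> {0..t}" and "t \<le> T"
  shows "\<bar>M1 (t - u) * \<beta> u\<bar> \<le> Bm * Bb"
proof -
  have "\<bar>M1 (t - u)\<bar> \<le> Bm" "0 \<le> \<beta> u" "\<beta> u \<le> Bb"
    using assms by (auto intro: M1_bound \<beta>_nonneg \<beta>_bound)
  then show ?thesis
    by (simp add: abs_mult mult_mono)
qed

lemma integrable_conv_integrand:
  assumes "0 \<le> p" and "q \<le> t" and "t \<le> T"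
  shows "(\<lambda>u. M1 (t - u) * \<beta> u) integrable_on {p..q}"
  by (rule integrable_on_Icc_bounded[where B="Bm * Bb"])
    (use assms in \<open>auto intro: abs_conv_integrand_le\<close>)

lemma abs_integral_conv_integrand_le:
  assumes "0 \<le> p" and "p \<le> q" and "q \<le> t" and "t \<le> T"
  shows "\<bar>integral {p..q} (\<lambda>u. M1 (t - u) * \<beta> u)\<bar> \<le> Bm * Bb * (q - p)"
proof -
  have "\<bar>integral {p..q} (\<lambda>u. M1 (t - u) * \<beta> u)\<bar> \<le> integral {p..q} (\<lambda>_. Bm * Bb)"
    using assms
    by (intro integral_norm_bound_integral[where f="\<lambda>u. M1 (t - u) * \<beta> u", simplified]
        integrable_conv_integrand abs_conv_integrand_le) auto
  then show ?thesis
    using assms by (simp add: mult_ac)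
qed

lemma M1_increment_le:
  assumes "0 \<le> y" and "0 \<le> h" and "y + h \<le> T"
  shows "\<bar>M1 (y + h) - M1 y\<bar> \<le> F (y + h) - F y + \<bar>K\<bar> * \<bar>conv (y + h) - conv y\<bar>"
proof -
  have "M1 (y + h) - M1 y = - (F (y + h) - F y) + K * (conv (y + h) - conv y)"
    using assms renewal[of y] renewal[of "y + h"] by (simp add: conv_def algebra_simps)
  moreover have "F y \<le> F (y + h)"
    using F_mono \<open>0 \<le> h\<close> by (simp add: monoD)
  ultimately show ?thesis
    by (simp add: abs_mult abs_triangle_ineq[THEN order_trans])
qed

lemma conv_increment_eq:
  assumes "0 \<le> x" and "0 \<le> h" and "x + h \<le> T"
  shows "conv (x + h) - conv x = integral {x..x + h} (\<lambda>u. M1 (x + h - u) * \<beta> u)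
    + integral {0..x} (\<lambda>u. (M1 (x - u + h) - M1 (x - u)) * \<beta> u)"
proof -
  have "conv (x + h) = integral {0..x} (\<lambda>u. M1 (x + h - u) * \<beta> u)
      + integral {x..x + h} (\<lambda>u. M1 (x + h - u) * \<beta> u)"
    unfolding conv_def using assms
    by (intro Henstock_Kurzweil_Integration.integral_combine[symmetric] integrable_conv_integrand) auto
  moreover have "integral {0..x} (\<lambda>u. (M1 (x - u + h) - M1 (x - u)) * \<beta> u)
      = integral {0..x} (\<lambda>u. M1 (x + h - u) * \<beta> u) - conv x"
  proof -
    have "(\<lambda>u. M1 (x + h - u) * \<beta> u) integrable_on {0..x}"
      "(\<lambda>u. M1 (x - u) * \<beta> u) integrable_on {0..x}"
      using assms by (auto intro: integrable_conv_integrand)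
    then show ?thesis
      unfolding conv_def by (subst integral_diff[symmetric]) (auto simp: algebra_simps)
  qed
  ultimately show ?thesis
    by simp
qed

lemma F_measurable [measurable]: "F \<in> borel_measurable borel"
  using F_mono by (rule borel_measurable_mono)

lemma abs_increment_integrand_le:
  assumes "0 \<le> W" and "u \<in> {0..x}" and "0 \<le> h" and "x + h \<le> T"
    and prior: "\<forall>y\<in>{0..x}. \<bar>conv (y + h) - conv y\<bar> \<le> W * exp (a * y)"
  shows "\<bar>(M1 (x - u + h) - M1 (x - u)) * \<beta> u\<bar>
    \<le> Bb * (F (x - u + h) - F (x - u)) + Bb * \<bar>K\<bar> * W * exp (a * (x - u))"
proof -
  have "\<bar>M1 (x - u + h) - M1 (x - u)\<bar> \<le> F (x - u + h) - F (x - u) + \<bar>K\<bar> * \<bar>conv (x - u + h) - conv (x - u)\<bar>"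
    using assms by (intro M1_increment_le) auto
  also have "\<dots> \<le> F (x - u + h) - F (x - u) + \<bar>K\<bar> * (W * exp (a * (x - u)))"
    using prior \<open>u \<in> {0..x}\<close> by (intro add_left_mono mult_left_mono) auto
  moreover have "0 \<le> \<beta> u" "\<beta> u \<le> Bb"
    using assms by (auto intro: \<beta>_nonneg \<beta>_bound)
  ultimately have "\<bar>M1 (x - u + h) - M1 (x - u)\<bar> * \<beta> u
      \<le> (F (x - u + h) - F (x - u) + \<bar>K\<bar> * (W * exp (a * (x - u)))) * Bb"
    by (intro mult_mono) auto
  then show ?thesis
    unfolding abs_mult abs_of_nonneg[OF \<open>0 \<le> \<beta> u\<close>] by (simp add: algebra_simps)
qed

lemma abs_conv_increment_le_step:
  assumes "0 < a" and "0 \<le> W" and "0 \<le> x" and "0 \<le> h" and "x + h \<le> T"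
    and prior: "\<forall>y\<in>{0..x}. \<bar>conv (y + h) - conv y\<bar> \<le> W * exp (a * y)"
  shows "\<bar>conv (x + h) - conv x\<bar> \<le> (Bm + 1) * Bb * h + Bb * \<bar>K\<bar> * W * ((exp (a * x) - 1) / a)"
proof -
  define incr where "incr y = F (y + h) - F y" for y
  define majorant where "majorant u = Bb * incr (x - u) + Bb * \<bar>K\<bar> * W * exp (a * (x - u))" for u
  obtain I where I: "(incr has_integral I) {0..x}" "I \<le> h"
    using integral_increment_le[OF F_measurable F_nonneg F_le_1 \<open>0 \<le> x\<close> \<open>0 \<le> h\<close>]
    unfolding incr_def[symmetric] by (blast intro: integrable_integral)
  have majorant_integral:
    "(majorant has_integral Bb * I + Bb * \<bar>K\<bar> * W * ((exp (a * x) - 1) / a)) {0..x}"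
  proof -
    have "((\<lambda>u. exp (a * (x - u))) has_integral (exp (a * x) - 1) / a) {0..x}"
      using assms by (intro has_integral_reflect_Icc[where f="\<lambda>y. exp (a * y)"] has_integral_exp_Icc) auto
    moreover have "((\<lambda>u. incr (x - u)) has_integral I) {0..x}"
      using I(1) by (rule has_integral_reflect_Icc)
    ultimately show ?thesis
      unfolding majorant_def by (intro has_integral_add has_integral_mult_right)
  qed
  have "(\<lambda>u. M1 (x + h - u) * \<beta> u - M1 (x - u) * \<beta> u) integrable_on {0..x}"
    using assms by (intro integrable_diff integrable_conv_integrand) auto
  then have "(\<lambda>u. (M1 (x - u + h) - M1 (x - u)) * \<beta> u) integrable_on {0..x}"
    by (simp add: algebra_simps)
  then have "\<bar>integral {0..x} (\<lambda>u. (M1 (x - u + h) - M1 (x - u)) * \<beta> u)\<bar> \<le> integral {0..x} majorant"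
    using majorant_integral abs_increment_integrand_le[OF \<open>0 \<le> W\<close> _ \<open>0 \<le> h\<close> \<open>x + h \<le> T\<close> prior]
    unfolding majorant_def incr_def
    by (intro integral_norm_bound_integral[where f="\<lambda>u. (M1 (x - u + h) - M1 (x - u)) * \<beta> u", simplified])
      (auto intro: has_integral_integrable)
  moreover have "\<bar>integral {x..x + h} (\<lambda>u. M1 (x + h - u) * \<beta> u)\<bar> \<le> Bm * Bb * h"
    using abs_integral_conv_integrand_le[of x "x + h" "x + h"] assms by simp
  moreover have "Bb * I \<le> Bb * h"
    using I(2) Bb_nonneg by (rule mult_left_mono)
  moreover have "\<bar>conv (x + h) - conv x\<bar> \<le> \<bar>integral {x..x + h} (\<lambda>u. M1 (x + h - u) * \<beta> u)\<bar>
      + \<bar>integral {0..x} (\<lambda>u. (M1 (x - u + h) - M1 (x - u)) * \<beta> u)\<bar>"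
    unfolding conv_increment_eq[OF \<open>0 \<le> x\<close> \<open>0 \<le> h\<close> \<open>x + h \<le> T\<close>] by (rule abs_triangle_ineq)
  moreover have "(Bm + 1) * Bb * h = Bm * Bb * h + Bb * h"
    by (simp add: algebra_simps)
  ultimately show ?thesis
    using integral_unique[OF majorant_integral] by linarith
qed

lemma abs_conv_increment_le:
  assumes "0 \<le> x" and "0 \<le> h" and "x + h \<le> T"
  shows "\<bar>conv (x + h) - conv x\<bar> \<le> 2 * (Bm + 1) * Bb * exp ((2 * Bb * \<bar>K\<bar> + 1) * T) * h"
proof -
  define a where "a = 2 * Bb * \<bar>K\<bar> + 1"
  have "0 < a"
    using Bb_nonneg by (simp add: a_def add_nonneg_pos)
  have "\<bar>conv (x + h) - conv x\<bar> \<le> 2 * ((Bm + 1) * Bb * h) * exp (a * x)"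
  proof (rule exp_weighted_sup_bound[where D="\<lambda>y. \<bar>conv (y + h) - conv y\<bar>" and R="T - h" and B="2 * (Bm * Bb * T)"])
    fix y assume "y \<in> {0..T - h}"
    moreover have "Bm * Bb * (y + h) \<le> Bm * Bb * T" "Bm * Bb * y \<le> Bm * Bb * T"
      using \<open>y \<in> {0..T - h}\<close> \<open>0 \<le> h\<close> Bm_nonneg Bb_nonneg by (auto intro!: mult_left_mono)
    ultimately have "\<bar>conv (y + h)\<bar> \<le> Bm * Bb * T" "\<bar>conv y\<bar> \<le> Bm * Bb * T"
      using abs_integral_conv_integrand_le[of 0 "y + h" "y + h"] abs_integral_conv_integrand_le[of 0 y y]
        \<open>0 \<le> h\<close> unfolding conv_def by auto
    then show "\<bar>conv (y + h) - conv y\<bar> \<le> 2 * (Bm * Bb * T)"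
      by linarith
  next
    fix W y assume W: "0 \<le> W" and prior: "\<forall>z\<in>{0..T - h}. \<bar>conv (z + h) - conv z\<bar> \<le> W * exp (a * z)"
      and y: "y \<in> {0..T - h}"
    have "\<bar>conv (y + h) - conv y\<bar> \<le> (Bm + 1) * Bb * h + Bb * \<bar>K\<bar> * W * ((exp (a * y) - 1) / a)"
      using \<open>0 < a\<close> W y \<open>0 \<le> h\<close> prior by (intro abs_conv_increment_le_step) auto
    also have "Bb * \<bar>K\<bar> * W * ((exp (a * y) - 1) / a) \<le> W / 2 * exp (a * y)"
    proof -
      have "Bb * \<bar>K\<bar> * W * (exp (a * y) - 1) \<le> (a / 2) * W * exp (a * y)"
        using W y Bb_nonneg by (intro mult_mono) (auto simp: a_def)
      then show ?thesis
        using \<open>0 < a\<close> by (simp add: field_simps)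
    qed
    finally show "\<bar>conv (y + h) - conv y\<bar> \<le> (Bm + 1) * Bb * h + W / 2 * exp (a * y)"
      by simp
  qed (use \<open>0 < a\<close> assms Bm_nonneg Bb_nonneg in auto)
  also have "\<dots> \<le> 2 * ((Bm + 1) * Bb * h) * exp (a * T)"
    using \<open>0 < a\<close> assms Bm_nonneg Bb_nonneg by (intro mult_left_mono) auto
  finally show ?thesis
    by (simp add: a_def mult_ac)
qed

lemma M1_increment_bound:
  assumes "0 \<le> s" and "s \<le> t" and "t \<le> T"
  shows "\<bar>M1 t - M1 s\<bar> \<le> (1 + \<bar>K\<bar> * 2 * (Bm + 1) * Bb * exp ((2 * Bb * \<bar>K\<bar> + 1) * T)) * ((t - s) + F t - F s)"
proof -
  define c where "c = 2 * (Bm + 1) * Bb * exp ((2 * Bb * \<bar>K\<bar> + 1) * T)"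
  have "0 \<le> c"
    using Bm_nonneg Bb_nonneg by (simp add: c_def)
  have "F s \<le> F t"
    using F_mono \<open>s \<le> t\<close> by (rule monoD)
  have "\<bar>M1 t - M1 s\<bar> \<le> F t - F s + \<bar>K\<bar> * \<bar>conv t - conv s\<bar>"
    using M1_increment_le[of s "t - s"] assms by simp
  also have "\<dots> \<le> F t - F s + \<bar>K\<bar> * (c * (t - s))"
    using abs_conv_increment_le[of s "t - s"] assms unfolding c_def by (intro add_left_mono mult_left_mono) auto
  also have "\<dots> \<le> (1 + \<bar>K\<bar> * c) * ((t - s) + F t - F s)"
  proof -
    have "0 \<le> \<bar>K\<bar> * c * (F t - F s)"
      using \<open>0 \<le> c\<close> \<open>F s \<le> F t\<close> by simp
    then show ?thesis
      using \<open>s \<le> t\<close> by (simp add: algebra_simps)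
  qed
  finally show ?thesis
    by (simp add: c_def mult_ac)
qed

end

lemma (in prob_space) mono_cmj_F:
  assumes "eta \<in> borel_measurable M"
  shows "mono (cmj_F M eta)"
proof (rule monoI)
  fix x y :: real assume "x \<le> y"
  then show "cmj_F M eta x \<le> cmj_F M eta y"
    unfolding cmj_F_def using assms by (intro finite_measure_mono) auto
qed

lemma (in prob_space) cmj_F_le_1: "cmj_F M eta x \<le> 1"
  unfolding cmj_F_def by (rule prob_le_1)

lemma cmj_F_nonneg: "0 \<le> cmj_F M eta x"
  by (simp add: cmj_F_def)

lemma (in prob_space) borel_measurable_cmj_bbar:
  assumes "(\<lambda>(t, \<omega>). b t \<omega>) \<in> borel_measurable (borel \<Otimes>\<^sub>M M)"
  shows "cmj_bbar M b \<in> borel_measurable borel"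
proof -
  note [measurable] = assms
  have "(\<lambda>t. \<integral>\<^sup>+\<omega>. ennreal (b t \<omega>) \<partial>M) \<in> borel_measurable borel"
    by (rule borel_measurable_nn_integral[where f="\<lambda>t \<omega>. ennreal (b t \<omega>)"]) measurable
  then show ?thesis
    unfolding cmj_bbar_def by measurable
qed

lemma cmj_bbar_nonneg: "0 \<le> cmj_bbar M b t"
  by (simp add: cmj_bbar_def)

lemma cmj_bbar_bounded_Icc:
  assumes "\<And>T. T > 0 \<Longrightarrow> \<exists>B::real. \<forall>t\<in>{0<..<T}. (\<integral>\<^sup>+\<omega>. ennreal (b t \<omega>) \<partial>M) \<le> ennreal B"
    and "0 \<le> T"
  obtains Bb where "\<And>u. u \<in> {0..T} \<Longrightarrow> cmj_bbar M b u \<le> Bb"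
proof -
  \<comment> \<open>The hypothesis only bounds bbar on open intervals; at 0 it is a finite real anyway.\<close>
  obtain B where B: "\<forall>u\<in>{0<..<T + 1}. (\<integral>\<^sup>+\<omega>. ennreal (b u \<omega>) \<partial>M) \<le> ennreal B"
    using assms(1)[of "T + 1"] assms(2) by auto
  have "cmj_bbar M b u \<le> max B (cmj_bbar M b 0)" if "u \<in> {0..T}" for u
  proof (cases "u = 0")
    case False
    then have "cmj_bbar M b u \<le> enn2real (ennreal B)"
      unfolding cmj_bbar_def using that B by (intro enn2real_mono) auto
    then show ?thesis
      using cmj_bbar_nonneg[of M b 0] by (cases "0 \<le> B") (auto simp: ennreal_neg)
  qed simp
  then show ?thesis
    by (rule that)
qed

lemma renewal_solution_integral_Icc:
  fixes K :: real and F bb M1 :: "real \<Rightarrow> real"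
  assumes "cmj_renewal_solution K F bb M1" and "bb \<in> borel_measurable borel"
    and "\<And>u. u \<in> {0..t} \<Longrightarrow> \<bar>M1 (t - u) * bb u\<bar> \<le> B" and "0 \<le> t"
  shows "M1 t = 1 - F t + K * integral {0..t} (\<lambda>u. M1 (t - u) * bb u)"
proof -
  have [measurable]: "M1 \<in> borel_measurable borel" "bb \<in> borel_measurable borel"
    using assms(1,2) by (auto simp: cmj_renewal_solution_def)
  have "set_integrable lborel {0..t} (\<lambda>u. M1 (t - u) * bb u)"
    using assms(3) by (intro set_integrable_Icc_bounded) auto
  then have "(LINT u:{0..t}|lborel. K * M1 (t - u) * bb u) = K * integral {0..t} (\<lambda>u. M1 (t - u) * bb u)"
    by (simp add: set_borel_integral_eq_integral(2) set_integral_mult_right mult.assoc)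
  then show ?thesis
    using assms(1,4) by (simp add: cmj_renewal_solution_def)
qed

lemma cmj_bounded_renewal_equation:
  assumes "prob_space M" and "eta \<in> borel_measurable M"
    and "(\<lambda>(t, \<omega>). b t \<omega>) \<in> borel_measurable (borel \<Otimes>\<^sub>M M)"
    and renewal: "cmj_renewal_solution (cmj_Lbar M L) (cmj_F M eta) (cmj_bbar M b) M1"
    and "0 \<le> T"
    and Bm: "\<And>t. t \<in> {0..T} \<Longrightarrow> \<bar>M1 t\<bar> \<le> Bm"
    and Bb: "\<And>u. u \<in> {0..T} \<Longrightarrow> cmj_bbar M b u \<le> Bb"
  shows "bounded_renewal_equation M1 (cmj_F M eta) (cmj_bbar M b) (cmj_Lbar M L) T Bm Bb"
proof unfold_locales
  have "0 \<le> Bm"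
    using Bm[of 0] \<open>0 \<le> T\<close> by force
  fix t assume "t \<in> {0..T}"
  then show "M1 t = 1 - cmj_F M eta t + cmj_Lbar M L * integral {0..t} (\<lambda>u. M1 (t - u) * cmj_bbar M b u)"
    using \<open>0 \<le> Bm\<close> assms(1,3)
    by (intro renewal_solution_integral_Icc[OF renewal prob_space.borel_measurable_cmj_bbar, where B="Bm * Bb"])
      (auto simp: abs_mult cmj_bbar_nonneg intro!: mult_mono Bm Bb)
qed (use assms in \<open>auto simp: cmj_renewal_solution_def cmj_F_nonneg cmj_bbar_nonneg
  intro: prob_space.mono_cmj_F prob_space.cmj_F_le_1 prob_space.borel_measurable_cmj_bbar\<close>)

theorem mainTheorem11:
  fixes M :: "'a measure"
    and L :: "'a \<Rightarrow> nat"
    and eta :: "'a \<Rightarrow> real"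
    and b :: "real \<Rightarrow> 'a \<Rightarrow> real"
    and M1 :: "real \<Rightarrow> real"
  assumes "prob_space M"
    and "L \<in> measurable M (count_space UNIV)"
    and "eta \<in> borel_measurable M"
    and "\<And>\<omega>. \<omega> \<in> space M \<Longrightarrow> eta \<omega> > 0"
    and "(\<lambda>(t, \<omega>). b t \<omega>) \<in> borel_measurable (borel \<Otimes>\<^sub>M M)"
    and "\<And>t \<omega>. \<omega> \<in> space M \<Longrightarrow> b t \<omega> \<ge> 0"
    and H1_L: "integrable M (\<lambda>\<omega>. real (L \<omega>))"
    and H1_b: "\<And>T. T > 0 \<Longrightarrow> \<exists>B::real. \<forall>t\<in>{0<..<T}. (\<integral>\<^sup>+\<omega>. ennreal (b t \<omega>) \<partial>M) \<le> ennreal B"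
    and "cmj_renewal_solution (cmj_Lbar M L) (cmj_F M eta) (cmj_bbar M b) M1"
  shows "\<forall>T>0. \<exists>C::real. \<forall>s t. 0 < s \<and> s < t \<and> t \<le> T \<longrightarrow>
           \<bar>M1 t - M1 s\<bar> \<le> C * ((t - s) + cmj_F M eta t - cmj_F M eta s)"
proof (intro allI impI)
  fix T :: real assume "0 < T"
  obtain Bm where Bm: "\<And>t. t \<in> {0..T} \<Longrightarrow> \<bar>M1 t\<bar> \<le> Bm"
    using assms(9) \<open>0 < T\<close> unfolding cmj_renewal_solution_def by (meson less_imp_le)
  obtain Bb where Bb: "\<And>u. u \<in> {0..T} \<Longrightarrow> cmj_bbar M b u \<le> Bb"
    using cmj_bbar_bounded_Icc[OF H1_b, of T] \<open>0 < T\<close> by auto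
  interpret bounded_renewal_equation M1 "cmj_F M eta" "cmj_bbar M b" "cmj_Lbar M L" T Bm Bb
    using \<open>0 < T\<close> Bm Bb by (intro cmj_bounded_renewal_equation[OF assms(1,3,5,9)]) auto
  show "\<exists>C. \<forall>s t. 0 < s \<and> s < t \<and> t \<le> T \<longrightarrow>
      \<bar>M1 t - M1 s\<bar> \<le> C * ((t - s) + cmj_F M eta t - cmj_F M eta s)"
    using M1_increment_bound by (meson less_imp_le)
qed

end
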